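(* Let $\mathcal{S}_n\subseteq\mathcal{T}$ have $n$ elements, with empirical loss $L_n$, and let $\mathbf{w}_n^*$ be the minimizer of $R_n(\mathbf{w})=L_n(\mathbf{w})+\frac{cV_n}{2}\|\mathbf{w}\|^2$. Let $\mathbf{w}^*$ be a minimizer of the expected loss $L$. Then $$\mathbb{E}\left[\|\mathbf{w}_n^*\|^2\right]\le\frac4c+\|\mathbf{w}^*\|^2 .$$
   Context: Let $Z$ be a random variable with distribution $P$ on a space $\mathcal{Z}$ and $f:\mathbb{R}^p\times\mathcal{Z}\to\mathbb{R}$ a loss function; $L(\mathbf{w})=\mathbb{E}_Z[f(\mathbf{w},Z)]$. The training set $\mathcal{T}=\{z_1,\dots,z_N\}$ consists of $N$ independent samples from $P$; for a (fixed, data-independent) subset $\mathcal{S}_n$ with $n$ elements, $L_n(\mathbf{w})=\frac1n\sum_{z\in\mathcal{S}_n}f(\mathbf{w},z)$. Standing assumption: there are positive constants $V_k$ such that for every $k$ and every set $\mathcal{S}$ of $k$ independent samples from $P$, $\mathbb{E}[\sup_{\mathbf{w}}|L(\mathbf{w})-L_{\mathcal{S}}(\mathbf{w})|]\le V_k$ (expectation over the samples). $c>0$ is a constant. Assumption: for every $z$, $f(\cdot,z)$ is convex with $M$-Lipschitz continuous gradient. *)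

theory Defs
  imports "HOL-Probability.Probability"
begin

definition exp_loss :: "'z measure \<Rightarrow> ('w \<Rightarrow> 'z \<Rightarrow> real) \<Rightarrow> 'w \<Rightarrow> real" where
  "exp_loss P f w = (\<integral>z. f w z \<partial>P)"

definition emp_loss :: "('w \<Rightarrow> 'z \<Rightarrow> real) \<Rightarrow> nat \<Rightarrow> (nat \<Rightarrow> 'z) \<Rightarrow> 'w \<Rightarrow> real" where
  "emp_loss f k zs w = (\<Sum>i<k. f w (zs i)) / real k"

abbreviation sample_measure :: "nat \<Rightarrow> 'z measure \<Rightarrow> (nat \<Rightarrow> 'z) measure" where
  "sample_measure k P \<equiv> PiM {..<k} (\<lambda>_. P)"

definition lipschitz_gradient :: "real \<Rightarrow> ('a::real_inner \<Rightarrow> real) \<Rightarrow> bool" where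
  "lipschitz_gradient M g \<longleftrightarrow> (\<exists>G. (\<forall>w. (g has_derivative (\<lambda>h. G w \<bullet> h)) (at w)) \<and>
      (\<forall>v w. norm (G w - G v) \<le> M * norm (w - v)))"

end

theory Submission
  imports Defs
begin

text \<open>
  Comparing the regularized empirical objective at its minimizer \<open>w\<^sub>n\<^sup>*\<close> with its value
  at \<open>w\<^sup>*\<close>, and using \<open>L(w\<^sup>*) \<le> L(w\<^sub>n\<^sup>*)\<close>, the two changes from \<open>L\<^sub>n\<close> to \<open>L\<close> cost at most
  \<open>2 sup\<^sub>w |L(w) - L\<^sub>n(w)|\<close>; hence \<open>(c V\<^sub>n/2) \<parallel>w\<^sub>n\<^sup>*\<parallel>\<^sup>2 \<le> (c V\<^sub>n/2) \<parallel>w\<^sup>*\<parallel>\<^sup>2 + 2 sup\<^sub>w |L(w) - L\<^sub>n(w)|\<close>.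
  Taking expectations and \<open>E[sup\<^sub>w |L(w) - L\<^sub>n(w)|] \<le> V\<^sub>n\<close> gives the claim.
\<close>

lemma regularized_minimizer_sq_norm_le:
  fixes L Ln :: "'a::real_normed_vector \<Rightarrow> real"
  assumes "r > 0"
    and "\<And>v. Ln w + r / 2 * norm w ^ 2 \<le> Ln v + r / 2 * norm v ^ 2"
    and "\<And>v. L wstar \<le> L v"
  shows "norm w ^ 2 \<le> norm wstar ^ 2 + 2 / r * (\<bar>L w - Ln w\<bar> + \<bar>L wstar - Ln wstar\<bar>)"
proof -
  have "r / 2 * norm w ^ 2 \<le> r / 2 * norm wstar ^ 2 + (\<bar>L w - Ln w\<bar> + \<bar>L wstar - Ln wstar\<bar>)"
    using assms(2)[of wstar] assms(3)[of w] by linarith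
  then show ?thesis
    using \<open>r > 0\<close> by (simp add: field_simps)
qed

lemma regularized_minimizer_sq_norm_le_SUP:
  fixes L Ln :: "'a::real_normed_vector \<Rightarrow> real"
  assumes "r > 0"
    and "\<And>v. Ln w + r / 2 * norm w ^ 2 \<le> Ln v + r / 2 * norm v ^ 2"
    and "\<And>v. L wstar \<le> L v"
  shows "ennreal (norm w ^ 2)
           \<le> ennreal (norm wstar ^ 2) + ennreal (4 / r) * (SUP v. ennreal \<bar>L v - Ln v\<bar>)"
proof -
  define D where "D = (SUP v. ennreal \<bar>L v - Ln v\<bar>)"
  have dev_le_D: "ennreal \<bar>L v - Ln v\<bar> \<le> D" for v
    unfolding D_def by (rule SUP_upper) simp
  have "ennreal (norm w ^ 2)
          \<le> ennreal (norm wstar ^ 2 + 2 / r * (\<bar>L w - Ln w\<bar> + \<bar>L wstar - Ln wstar\<bar>))"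
    using regularized_minimizer_sq_norm_le[of r Ln w L wstar] assms by (intro ennreal_leI) blast
  also have "\<dots> = ennreal (norm wstar ^ 2)
                   + ennreal (2 / r) * (ennreal \<bar>L w - Ln w\<bar> + ennreal \<bar>L wstar - Ln wstar\<bar>)"
    using \<open>r > 0\<close> by (simp add: ennreal_plus[symmetric] ennreal_mult[symmetric] del: ennreal_plus)
  also have "\<dots> \<le> ennreal (norm wstar ^ 2) + ennreal (2 / r) * (D + D)"
    by (intro add_left_mono mult_left_mono add_mono dev_le_D) simp
  also have "ennreal (2 / r) * (D + D) = ennreal (4 / r) * D"
  proof -
    have "ennreal (2 / r) * 2 = ennreal (4 / r)"
      using ennreal_mult[of "2 / r" 2] \<open>r > 0\<close> by simp
    then show ?thesis
      by (simp add: mult_2[symmetric] mult.assoc[symmetric])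
  qed
  finally show ?thesis
    unfolding D_def .
qed

lemma (in prob_space) nn_integral_le_const_plus_cmult:
  assumes "D \<in> borel_measurable M"
    and "\<And>x. x \<in> space M \<Longrightarrow> g x \<le> a + K * D x"
  shows "(\<integral>\<^sup>+ x. g x \<partial>M) \<le> a + K * (\<integral>\<^sup>+ x. D x \<partial>M)"
proof -
  have "(\<integral>\<^sup>+ x. g x \<partial>M) \<le> (\<integral>\<^sup>+ x. a + K * D x \<partial>M)"
    using assms(2) by (rule nn_integral_mono)
  also have "\<dots> = a + K * (\<integral>\<^sup>+ x. D x \<partial>M)"
    using assms(1) by (simp add: nn_integral_add nn_integral_cmult emeasure_space_1)
  finally show ?thesis .
qed

theorem lemma6:
  fixes P :: "'z measure" and f :: "real^'p \<Rightarrow> 'z \<Rightarrow> real"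
    and V :: "nat \<Rightarrow> real" and c M :: real and n :: nat
    and wn :: "(nat \<Rightarrow> 'z) \<Rightarrow> real^'p" and wstar :: "real^'p"
  assumes "prob_space P"
    and "c > 0"
    and "\<forall>z. convex_on UNIV (\<lambda>w. f w z) \<and> lipschitz_gradient M (\<lambda>w. f w z)"
    and "\<forall>w. integrable P (f w)"
    and "\<forall>k. V k > 0"
    and "\<forall>k\<ge>1. (\<lambda>zs. SUP w. ennreal \<bar>exp_loss P f w - emp_loss f k zs w\<bar>)
                   \<in> borel_measurable (sample_measure k P)
             \<and> (\<integral>\<^sup>+ zs. (SUP w. ennreal \<bar>exp_loss P f w - emp_loss f k zs w\<bar>)
                   \<partial>sample_measure k P) \<le> ennreal (V k)"
    and "n \<ge> 1"
    and "\<forall>zs\<in>space (sample_measure n P). \<forall>w.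
           emp_loss f n zs (wn zs) + c * V n / 2 * norm (wn zs) ^ 2
             \<le> emp_loss f n zs w + c * V n / 2 * norm w ^ 2"
    and "wn \<in> borel_measurable (sample_measure n P)"
    and "\<forall>w. exp_loss P f wstar \<le> exp_loss P f w"
  shows "(\<integral>\<^sup>+ zs. ennreal (norm (wn zs) ^ 2) \<partial>sample_measure n P)
           \<le> ennreal (4 / c + norm wstar ^ 2)"
proof -
  define D where "D = (\<lambda>zs. SUP w. ennreal \<bar>exp_loss P f w - emp_loss f n zs w\<bar>)"
  have reg_pos: "c * V n > 0"
    using assms(2,5) by simp
  interpret sample: prob_space "sample_measure n P"
    by (intro prob_space_PiM) (simp add: assms(1))
  have "(\<integral>\<^sup>+ zs. ennreal (norm (wn zs) ^ 2) \<partial>sample_measure n P)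
          \<le> ennreal (norm wstar ^ 2) + ennreal (4 / (c * V n)) * (\<integral>\<^sup>+ zs. D zs \<partial>sample_measure n P)"
  proof (rule sample.nn_integral_le_const_plus_cmult)
    show "D \<in> borel_measurable (sample_measure n P)"
      using assms(6,7) by (simp add: D_def)
    fix zs assume "zs \<in> space (sample_measure n P)"
    then show "ennreal (norm (wn zs) ^ 2) \<le> ennreal (norm wstar ^ 2) + ennreal (4 / (c * V n)) * D zs"
      unfolding D_def using assms(8,10) reg_pos
      by (intro regularized_minimizer_sq_norm_le_SUP) (auto simp: mult.assoc)
  qed
  also have "\<dots> \<le> ennreal (norm wstar ^ 2) + ennreal (4 / (c * V n)) * ennreal (V n)"
    using assms(6,7) by (intro add_left_mono mult_left_mono) (simp_all add: D_def)
  also have "\<dots> = ennreal (4 / c + norm wstar ^ 2)"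
  proof -
    have "ennreal (4 / (c * V n)) * ennreal (V n) = ennreal (4 / c)"
      using ennreal_mult[of "4 / (c * V n)" "V n"] reg_pos assms(5)
      by (simp add: less_imp_le less_imp_neq[symmetric])
    then show ?thesis
      using assms(2) by (simp add: ennreal_plus[symmetric] add.commute del: ennreal_plus)
  qed
  finally show ?thesis .
qed

end
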